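(* Let $w$ be a graphon and $x\in[0,1]$. Then the suprema defining the shell index and the degeneracy are attained, and $\delta_x(w)=\max\{\kappa\in[0,1]: x\in K_\kappa(w)\}$, $\delta(w)=\max\{\kappa\in[0,1]: K_\kappa(w)\neq\emptyset\}=\max\{\delta_y(w): y\in[0,1]\}$.
   Context: A graphon is a Lebesgue-measurable symmetric function $w:[0,1]^2\to[0,1]$. For a measurable $K\subseteq[0,1]$ let $d_w^K(x)=\int_K w(x,y)\,\mathrm{d}y$ and $d_w(x)=d_w^{[0,1]}(x)$. For $\kappa\in[0,1]$ define recursively $K^{1}_{\kappa}(w)=\{x: d_w(x)\ge\kappa\}$ and $K^{n+1}_{\kappa}(w)=\{x\in K^{n}_{\kappa}(w): d_w^{K^{n}_{\kappa}(w)}(x)\ge\kappa\}$, and let the $\kappa$-core be $K_{\kappa}(w)=\bigcap_{n\ge1}K^{n}_{\kappa}(w)$. The shell index of $x$ is $\delta_x(w)=\sup\{\kappa: x\in K_\kappa(w)\}$ and the degeneracy is $\delta(w)=\sup\{\kappa: |K_\kappa(w)|>0\}$, with $|\cdot|$ Lebesgue measure. *)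

theory Defs
  imports "HOL-Analysis.Analysis"
begin

text \<open>A graphon: Lebesgue-measurable symmetric function on the unit square with values in [0,1].
  It is represented as a curried real function; only its values on the unit square matter.\<close>
definition graphon :: "(real \<Rightarrow> real \<Rightarrow> real) \<Rightarrow> bool" where
  "graphon w \<longleftrightarrow>
     (\<lambda>(x, y). w x y) \<in> borel_measurable (lebesgue_on ({0..1} \<times> {0..1}))
   \<and> (\<forall>x\<in>{0..1}. \<forall>y\<in>{0..1}. w x y = w y x)
   \<and> (\<forall>x\<in>{0..1}. \<forall>y\<in>{0..1}. 0 \<le> w x y \<and> w x y \<le> 1)"

definition gdeg :: "(real \<Rightarrow> real \<Rightarrow> real) \<Rightarrow> real set \<Rightarrow> real \<Rightarrow> real" where
  "gdeg w K x = (LINT y:K|lebesgue. w x y)"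

text \<open>core_step w k n is the set K^{n+1}_k(w) of the paper.\<close>
primrec core_step :: "(real \<Rightarrow> real \<Rightarrow> real) \<Rightarrow> real \<Rightarrow> nat \<Rightarrow> real set" where
  "core_step w k 0 = {x \<in> {0..1}. gdeg w {0..1} x \<ge> k}"
| "core_step w k (Suc n) = {x \<in> core_step w k n. gdeg w (core_step w k n) x \<ge> k}"

definition kcore :: "(real \<Rightarrow> real \<Rightarrow> real) \<Rightarrow> real \<Rightarrow> real set" where
  "kcore w k = (\<Inter>n. core_step w k n)"

definition shell_index :: "(real \<Rightarrow> real \<Rightarrow> real) \<Rightarrow> real \<Rightarrow> real" where
  "shell_index w x = Sup {k \<in> {0..1}. x \<in> kcore w k}"

definition degeneracy :: "(real \<Rightarrow> real \<Rightarrow> real) \<Rightarrow> real" where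
  "degeneracy w = Sup {k \<in> {0..1}. measure lebesgue (kcore w k) > 0}"

end

theory Submission
  imports Defs
begin

text \<open>The \<kappa>-cores decrease in \<kappa> and are left-continuous,
  K_\<kappa> = \<Inter>_{k<\<kappa>} K_k: at each level n this is monotone convergence of the degrees into K^n_k
  as k increases to \<kappa>, which needs every K^n_k to be measurable, i.e. degree functions to be
  measurable (Fubini for the completed product measure). Left-continuity makes
  {\<kappa>. x \<in> K_\<kappa>} a closed interval [0, \<delta>_x(w)]. A point of K_\<kappa> has degree at least \<kappa> into
  every K^n_\<kappa>, so a nonempty \<kappa>-core has measure at least \<kappa>. Hence nonempty and
  positive-measure cores coincide, and continuity of measure along k_j increasing to \<delta>(w)
  gives |K_\<delta>(w)| \<ge> \<delta>(w).\<close>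

lemma graphon_range:
  assumes "graphon w" "x \<in> {0..1}" "y \<in> {0..1}"
  shows "0 \<le> w x y" "w x y \<le> 1"
  using assms unfolding graphon_def by auto

lemma gdeg_eq_integral: "gdeg w K x = (\<integral>y. indicator K y * w x y \<partial>lebesgue)"
  by (simp add: gdeg_def set_lebesgue_integral_def)

lemma gdeg_nonneg:
  assumes "graphon w" "K \<subseteq> {0..1}" "x \<in> {0..1}"
  shows "0 \<le> gdeg w K x"
  unfolding gdeg_eq_integral
  using assms graphon_range by (intro integral_nonneg_AE AE_I2) (auto simp: indicator_def)

lemma emeasure_subset_unit_interval_finite:
  assumes "K \<subseteq> {0..1::real}"
  shows "emeasure lebesgue K \<noteq> \<infinity>"
proof -
  have "emeasure lebesgue K \<le> emeasure lebesgue {0..1::real}"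
    using assms by (intro emeasure_mono) auto
  then show ?thesis
    by (auto simp: top_unique)
qed

lemma gdeg_le_measure:
  assumes "graphon w" "K \<in> sets lebesgue" "K \<subseteq> {0..1}" "x \<in> {0..1}"
  shows "gdeg w K x \<le> measure lebesgue K"
proof -
  have "integrable lebesgue (indicator K :: real \<Rightarrow> real)"
    using assms(2) emeasure_subset_unit_interval_finite[OF assms(3)]
    by (simp add: integrable_indicator_iff less_top)
  moreover have "indicator K y * w x y \<le> indicator K y" "0 \<le> (indicator K y :: real)" for y
    using graphon_range[OF assms(1,4), of y] assms(3) by (auto simp: indicator_def)
  ultimately have "gdeg w K x \<le> (\<integral>y. indicator K y \<partial>lebesgue)"
    unfolding gdeg_eq_integral by (rule integral_mono')
  then show ?thesis by simp
qed

text \<open>Integrability of \<open>w x\<close> is derived from a positive degree, because a non-integrable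
  function has integral 0 by convention.\<close>
lemma set_integrable_of_gdeg_pos:
  assumes "0 < gdeg w {0..1} x" "K \<in> sets lebesgue" "K \<subseteq> {0..1}"
  shows "set_integrable lebesgue K (w x)"
proof -
  have "set_integrable lebesgue {0..1} (w x)"
    using assms(1) not_integrable_integral_eq
    unfolding gdeg_def set_lebesgue_integral_def set_integrable_def by force
  then show ?thesis using assms(2,3) by (rule set_integrable_subset)
qed

lemma gdeg_mono:
  assumes "graphon w" "0 < gdeg w {0..1} x" "x \<in> {0..1}"
    and "A \<subseteq> B" "B \<in> sets lebesgue" "B \<subseteq> {0..1}"
  shows "gdeg w A x \<le> gdeg w B x"
proof -
  have "integrable lebesgue (\<lambda>y. indicator B y * w x y)"
    using set_integrable_of_gdeg_pos[OF assms(2,5,6)] by (simp add: set_integrable_def)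
  moreover have "indicator A y * w x y \<le> indicator B y * w x y" "0 \<le> indicator B y * w x y" for y
    using graphon_range[OF assms(1,3), of y] assms(4,6) by (auto simp: indicator_def)
  ultimately show ?thesis
    unfolding gdeg_eq_integral by (rule integral_mono')
qed

lemma gdeg_INT_decseq_tendsto:
  assumes "0 < gdeg w {0..1} x" "decseq A" "\<And>j. A j \<in> sets lebesgue" "A 0 \<subseteq> {0..1}"
  shows "(\<lambda>j. gdeg w (A j) x) \<longlonglongrightarrow> gdeg w (\<Inter>j. A j) x"
  unfolding gdeg_def
  using assms(3,2) set_integrable_of_gdeg_pos[OF assms(1) assms(3)[of 0] assms(4)]
  by (rule set_integral_cont_down)

text \<open>w agrees a.e. on the square with a Borel function G; by Fubini, for a.e. x the section
  G(x,-) agrees a.e. with w x, and integrals of Borel sections are Borel functions of x.\<close>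
lemma gdeg_ae_eq_borel:
  assumes g: "graphon w" and K: "K \<in> sets lebesgue" "K \<subseteq> {0..1}"
  obtains I where "I \<in> borel_measurable lborel"
    and "AE x in lborel. x \<in> {0..1} \<longrightarrow> gdeg w K x = I x"
proof -
  let ?S = "{0..1::real}"
  define F where "F = (\<lambda>z::real\<times>real. if z \<in> ?S \<times> ?S then case_prod w z else 0)"
  have "?S \<times> ?S \<in> sets (borel :: (real \<times> real) measure)"
    by (intro borel_closed closed_Times) auto
  then have "?S \<times> ?S \<in> sets (lebesgue :: (real \<times> real) measure)"
    by simp
  then have "F \<in> borel_measurable lebesgue"
    unfolding F_def using borel_measurable_if g unfolding graphon_def by blast
  then obtain G where G: "G \<in> borel_measurable (lborel \<Otimes>\<^sub>M lborel)"
    and F_ae_G: "AE z in lborel \<Otimes>\<^sub>M lborel. F z = G z"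
    using completion_ex_borel_measurable_real unfolding lborel_prod by blast
  have FG: "AE x in lborel. AE y in lborel. F (x,y) = G (x,y)"
    using lborel_pair.AE_pair[OF F_ae_G] .
  obtain k :: "real \<Rightarrow> real" where k: "k \<in> borel_measurable lborel"
    and "AE y in lborel. indicator K y = k y"
    using completion_ex_borel_measurable_real borel_measurable_indicator[OF K(1)] by blast
  then have Kk: "AE y in lebesgue. indicator K y = k y"
    by (intro AE_completion)
  define I where "I = (\<lambda>x. \<integral>y. k y * G (x,y) \<partial>lborel)"
  show ?thesis
  proof
    show "I \<in> borel_measurable lborel"
      unfolding I_def by (rule lborel.borel_measurable_lebesgue_integral) (use G k in measurable)
    show "AE x in lborel. x \<in> ?S \<longrightarrow> gdeg w K x = I x"
      using FG
    proof eventually_elim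
      case (elim x)
      show ?case
      proof
        assume x: "x \<in> ?S"
        have wF: "indicator K y * w x y = indicator K y * F (x,y)" for y
          using x K(2) by (auto simp: F_def indicator_def)
        have ae: "AE y in lebesgue. indicator K y * w x y = k y * G (x,y)"
          using Kk AE_completion[OF elim] by eventually_elim (metis wF)
        have mb: "(\<lambda>y. k y * G (x,y)) \<in> borel_measurable lborel"
          using G k by measurable
        then have mb': "(\<lambda>y. k y * G (x,y)) \<in> borel_measurable lebesgue"
          by (rule measurable_completion)
        have "gdeg w K x = (\<integral>y. indicator K y * w x y \<partial>lebesgue)"
          by (rule gdeg_eq_integral)
        also have "\<dots> = (\<integral>y. k y * G (x,y) \<partial>lebesgue)"
          using ae borel_measurable_AE[OF mb'] by (intro integral_cong_AE[OF _ mb']) (auto simp: eq_commute)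
        also have "\<dots> = I x"
          unfolding I_def by (rule integral_completion[OF mb])
        finally show "gdeg w K x = I x" .
      qed
    qed
  qed
qed

lemma gdeg_measurable:
  assumes "graphon w" "K \<in> sets lebesgue" "K \<subseteq> {0..1}"
  shows "gdeg w K \<in> borel_measurable (lebesgue_on {0..1})"
proof -
  let ?S = "{0..1::real}"
  obtain I where I: "I \<in> borel_measurable lborel"
    and gdeg_I: "AE x in lborel. x \<in> ?S \<longrightarrow> gdeg w K x = I x"
    using gdeg_ae_eq_borel[OF assms] .
  have "(\<lambda>x. if x \<in> ?S then I x else 0) \<in> borel_measurable lebesgue"
    using measurable_completion[OF I] by (intro measurable_If) auto
  moreover have "AE x in lebesgue. (if x \<in> ?S then I x else 0) = (if x \<in> ?S then gdeg w K x else 0)"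
    using AE_completion[OF gdeg_I] by eventually_elim auto
  ultimately have "(\<lambda>x. if x \<in> ?S then gdeg w K x else 0) \<in> borel_measurable lebesgue"
    by (rule borel_measurable_AE)
  then show ?thesis
    by (subst measurable_restrict_space_iff) auto
qed

lemma sets_gdeg_superlevel:
  assumes "graphon w" "K \<in> sets lebesgue" "K \<subseteq> {0..1}" "L \<in> sets lebesgue" "L \<subseteq> {0..1}"
  shows "{x \<in> L. k \<le> gdeg w K x} \<in> sets lebesgue"
proof -
  have "{x \<in> {0..1}. k \<le> gdeg w K x} \<in> sets (lebesgue_on {0..1})"
    using gdeg_measurable[OF assms(1-3)] unfolding borel_measurable_iff_ge by simp
  then have "{x \<in> {0..1}. k \<le> gdeg w K x} \<in> sets lebesgue"
    by (subst (asm) sets_restrict_space_iff) auto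
  then have "L \<inter> {x \<in> {0..1}. k \<le> gdeg w K x} \<in> sets lebesgue"
    using assms(4) by blast
  moreover have "L \<inter> {x \<in> {0..1}. k \<le> gdeg w K x} = {x \<in> L. k \<le> gdeg w K x}"
    using assms(5) by blast
  ultimately show ?thesis by simp
qed

lemma core_step_subset: "core_step w k n \<subseteq> {0..1}"
  by (induction n) auto

lemma decseq_core_step: "decseq (core_step w k)"
  by (rule decseq_SucI) auto

lemma core_step_sets:
  assumes "graphon w"
  shows "core_step w k n \<in> sets lebesgue"
proof (induction n)
  case 0
  show ?case using sets_gdeg_superlevel[OF assms, of "{0..1}" "{0..1}"] by simp
next
  case (Suc n)
  show ?case using sets_gdeg_superlevel[OF assms Suc core_step_subset Suc core_step_subset] by simp
qed

lemma core_step_nonpos: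
  assumes "graphon w" "k \<le> 0"
  shows "core_step w k n = {0..1}"
proof -
  have "k \<le> gdeg w K x" if "K \<subseteq> {0..1}" "x \<in> {0..1}" for K x
    using gdeg_nonneg[OF assms(1) that] assms(2) by linarith
  then show ?thesis by (induction n) auto
qed

lemma core_step_antimono:
  assumes g: "graphon w" and "k \<le> k'"
  shows "core_step w k' n \<subseteq> core_step w k n"
proof (cases "k \<le> 0")
  case True
  then show ?thesis using core_step_nonpos[OF g] core_step_subset by blast
next
  case False
  show ?thesis
  proof (induction n)
    case 0
    show ?case using assms(2) by auto
  next
    case (Suc n)
    show ?case
    proof
      fix x assume x: "x \<in> core_step w k' (Suc n)"
      then have "x \<in> core_step w k' 0"
        using decseqD[OF decseq_core_step[of w k'], of 0 "Suc n"] by blast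
      then have "0 < gdeg w {0..1} x" "x \<in> {0..1}"
        using False assms(2) by auto
      then have "gdeg w (core_step w k' n) x \<le> gdeg w (core_step w k n) x"
        by (rule gdeg_mono[OF g _ _ Suc core_step_sets[OF g] core_step_subset])
      then show "x \<in> core_step w k (Suc n)"
        using x Suc assms(2) by auto
    qed
  qed
qed

lemma incseq_tendsto_from_below:
  fixes \<kappa> :: real
  assumes "0 < \<kappa>"
  obtains kj where "\<And>j. 0 < kj j" "\<And>j. kj j < \<kappa>" "incseq kj" "kj \<longlonglongrightarrow> \<kappa>"
proof
  let ?kj = "\<lambda>j::nat. \<kappa> - \<kappa> / (real j + 2)"
  show "0 < ?kj j" "?kj j < \<kappa>" for j
    using assms by (simp_all add: field_simps add_pos_nonneg)
  show "incseq ?kj"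
    using assms by (intro incseq_SucI) (simp add: divide_left_mono)
  have "(\<lambda>j. \<kappa> / real (j + 2)) \<longlonglongrightarrow> 0"
    using LIMSEQ_ignore_initial_segment[OF lim_const_over_n[of \<kappa>], of 2] .
  then have "?kj \<longlonglongrightarrow> \<kappa> - 0"
    by (intro tendsto_intros) (simp add: add.commute)
  then show "?kj \<longlonglongrightarrow> \<kappa>" by simp
qed

lemma INT_incseq_eq_INT_below:
  fixes A :: "real \<Rightarrow> 'a set"
  assumes anti: "\<And>k k'. k \<le> k' \<Longrightarrow> A k' \<subseteq> A k"
    and kj: "\<And>j. 0 \<le> kj j" "\<And>j. kj j < \<kappa>" "kj \<longlonglongrightarrow> \<kappa>"
  shows "(\<Inter>j. A (kj j)) = (\<Inter>k\<in>{0..<\<kappa>}. A k)"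
proof
  show "(\<Inter>k\<in>{0..<\<kappa>}. A k) \<subseteq> (\<Inter>j. A (kj j))"
    using kj(1,2) by auto
  show "(\<Inter>j. A (kj j)) \<subseteq> (\<Inter>k\<in>{0..<\<kappa>}. A k)"
  proof (intro INT_greatest)
    fix k assume "k \<in> {0..<\<kappa>}"
    then have "\<forall>\<^sub>F j in sequentially. k < kj j"
      using order_tendstoD(1)[OF kj(3)] by simp
    then obtain j where "k \<le> kj j"
      by (auto simp: eventually_sequentially intro: less_imp_le)
    then show "(\<Inter>j. A (kj j)) \<subseteq> A k" using anti by blast
  qed
qed

lemma core_step_left_continuous:
  assumes g: "graphon w" and "0 < \<kappa>"
  shows "core_step w \<kappa> n = (\<Inter>k\<in>{0..<\<kappa>}. core_step w k n)"
proof -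
  obtain kj where kj: "\<And>j. 0 < kj j" "\<And>j. kj j < \<kappa>" "incseq kj" "kj \<longlonglongrightarrow> \<kappa>"
    using incseq_tendsto_from_below[OF assms(2)] by blast
  have anti: "\<And>k k' n. k \<le> k' \<Longrightarrow> core_step w k' n \<subseteq> core_step w k n"
    using core_step_antimono[OF g] by blast
  have below: "kj j \<in> {0..<\<kappa>}" for j
    using kj(1,2) less_imp_le by auto
  have INT_kj: "(\<Inter>j. core_step w (kj j) m) = (\<Inter>k\<in>{0..<\<kappa>}. core_step w k m)" for m
    using INT_incseq_eq_INT_below[of "\<lambda>k. core_step w k m", OF anti less_imp_le[OF kj(1)] kj(2,4)] .
  have dec: "decseq (\<lambda>j. core_step w (kj j) m)" for m
    by (intro decseq_SucI anti incseqD[OF kj(3)]) simp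
  have closed: "core_step w \<kappa> m = (\<Inter>k\<in>{0..<\<kappa>}. core_step w k m)"
    if "(\<Inter>k\<in>{0..<\<kappa>}. core_step w k m) \<subseteq> core_step w \<kappa> m" for m
    using that by (intro equalityI INT_greatest anti) auto
  have "(\<Inter>k\<in>{0..<\<kappa>}. core_step w k n) \<subseteq> core_step w \<kappa> n"
  proof (induction n)
    case 0
    show ?case
    proof
      fix x assume "x \<in> (\<Inter>k\<in>{0..<\<kappa>}. core_step w k 0)"
      then have "x \<in> core_step w (kj j) 0" for j
        by (rule INT_D[OF _ below])
      then have "x \<in> {0..1}" "\<And>j. kj j \<le> gdeg w {0..1} x" by auto
      moreover have "\<kappa> \<le> gdeg w {0..1} x"
        by (rule LIMSEQ_le_const2[OF kj(4)]) (use calculation(2) in blast)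
      ultimately show "x \<in> core_step w \<kappa> 0" by simp
    qed
  next
    case (Suc n)
    show ?case
    proof
      fix x assume x: "x \<in> (\<Inter>k\<in>{0..<\<kappa>}. core_step w k (Suc n))"
      then have xj: "x \<in> core_step w (kj j) (Suc n)" for j
        by (rule INT_D[OF _ below])
      have xn: "x \<in> core_step w \<kappa> n"
        using x Suc by auto
      have "x \<in> core_step w (kj 0) 0"
        using xj[of 0] decseqD[OF decseq_core_step[of w "kj 0"], of 0 "Suc n"] by blast
      then have "0 < gdeg w {0..1} x"
        using kj(1)[of 0] by auto
      then have "(\<lambda>j. gdeg w (core_step w (kj j) n) x) \<longlonglongrightarrow> gdeg w (\<Inter>j. core_step w (kj j) n) x"
        by (rule gdeg_INT_decseq_tendsto[OF _ dec core_step_sets[OF g] core_step_subset])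
      also have "(\<Inter>j. core_step w (kj j) n) = core_step w \<kappa> n"
        using INT_kj closed[OF Suc] by simp
      finally have "\<kappa> \<le> gdeg w (core_step w \<kappa> n) x"
        by (rule LIMSEQ_le[OF kj(4)]) (use xj in auto)
      then show "x \<in> core_step w \<kappa> (Suc n)"
        using xn by simp
    qed
  qed
  then show ?thesis by (rule closed)
qed

lemma kcore_subset: "kcore w k \<subseteq> {0..1}"
  unfolding kcore_def using core_step_subset[of w k 0] by blast

lemma kcore_sets: "graphon w \<Longrightarrow> kcore w k \<in> sets lebesgue"
  unfolding kcore_def using core_step_sets by blast

lemma kcore_nonpos: "graphon w \<Longrightarrow> k \<le> 0 \<Longrightarrow> kcore w k = {0..1}"
  unfolding kcore_def using core_step_nonpos by simp

lemma kcore_antimono: "graphon w \<Longrightarrow> k \<le> k' \<Longrightarrow> kcore w k' \<subseteq> kcore w k"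
  unfolding kcore_def using core_step_antimono by blast

lemma kcore_left_continuous:
  assumes "graphon w" "0 < \<kappa>"
  shows "kcore w \<kappa> = (\<Inter>k\<in>{0..<\<kappa>}. kcore w k)"
  unfolding kcore_def core_step_left_continuous[OF assms] by blast

lemma measure_kcore_ge:
  assumes g: "graphon w" and "kcore w \<kappa> \<noteq> {}"
  shows "\<kappa> \<le> measure lebesgue (kcore w \<kappa>)"
proof -
  obtain x where x: "x \<in> kcore w \<kappa>" using assms(2) by blast
  have "(\<lambda>n. measure lebesgue (core_step w \<kappa> n)) \<longlonglongrightarrow> measure lebesgue (kcore w \<kappa>)"
    unfolding kcore_def
    by (rule Lim_measure_decseq[OF _ decseq_core_step emeasure_subset_unit_interval_finite[OF core_step_subset]])
      (use core_step_sets[OF g] in blast)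
  moreover have "\<kappa> \<le> measure lebesgue (core_step w \<kappa> n)" for n
  proof -
    have "x \<in> core_step w \<kappa> (Suc n)"
      using x unfolding kcore_def by blast
    then have "\<kappa> \<le> gdeg w (core_step w \<kappa> n) x" "x \<in> {0..1}"
      using core_step_subset[of w \<kappa> n] by auto
    then show ?thesis
      using gdeg_le_measure[OF g core_step_sets[OF g] core_step_subset] by (meson order_trans)
  qed
  ultimately show ?thesis
    by (intro LIMSEQ_le_const) auto
qed

lemma measure_kcore_ge_of_below:
  assumes g: "graphon w" and "0 < \<kappa>" and ne: "\<And>k. 0 \<le> k \<Longrightarrow> k < \<kappa> \<Longrightarrow> kcore w k \<noteq> {}"
  shows "\<kappa> \<le> measure lebesgue (kcore w \<kappa>)"
proof -
  obtain kj where kj: "\<And>j. 0 < kj j" "\<And>j. kj j < \<kappa>" "incseq kj" "kj \<longlonglongrightarrow> \<kappa>"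
    using incseq_tendsto_from_below[OF assms(2)] by blast
  have anti: "\<And>k k'. k \<le> k' \<Longrightarrow> kcore w k' \<subseteq> kcore w k"
    using kcore_antimono[OF g] by blast
  have "(\<lambda>j. measure lebesgue (kcore w (kj j))) \<longlonglongrightarrow> measure lebesgue (\<Inter>j. kcore w (kj j))"
  proof (rule Lim_measure_decseq[OF _ _ emeasure_subset_unit_interval_finite[OF kcore_subset]])
    show "range (\<lambda>j. kcore w (kj j)) \<subseteq> sets lebesgue"
      using kcore_sets[OF g] by blast
    show "decseq (\<lambda>j. kcore w (kj j))"
      by (intro decseq_SucI anti incseqD[OF kj(3)]) simp
  qed
  also have "(\<Inter>j. kcore w (kj j)) = kcore w \<kappa>"
    using kcore_left_continuous[OF g assms(2)]
      INT_incseq_eq_INT_below[of "kcore w", OF anti less_imp_le[OF kj(1)] kj(2,4)] by simp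
  finally show ?thesis
    by (rule LIMSEQ_le[OF kj(4)])
      (use measure_kcore_ge[OF g ne] kj(1,2) less_imp_le in blast)
qed

lemma measure_kcore_pos_iff:
  assumes "graphon w"
  shows "0 < measure lebesgue (kcore w k) \<longleftrightarrow> kcore w k \<noteq> {}"
proof (cases "k \<le> 0")
  case True
  then show ?thesis using kcore_nonpos[OF assms] by simp
next
  case False
  then show ?thesis using measure_kcore_ge[OF assms, of k] by fastforce
qed

lemma cSup_attained_if_left_closed:
  fixes S :: "real set"
  assumes "0 \<in> S" "S \<subseteq> {0..1}"
    and down: "\<And>s k. s \<in> S \<Longrightarrow> 0 \<le> k \<Longrightarrow> k \<le> s \<Longrightarrow> k \<in> S"
    and left: "\<And>\<kappa>. 0 < \<kappa> \<Longrightarrow> \<kappa> \<le> 1 \<Longrightarrow> {0..<\<kappa>} \<subseteq> S \<Longrightarrow> \<kappa> \<in> S"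
  shows "Sup S \<in> S \<and> (\<forall>k\<in>S. k \<le> Sup S)"
proof -
  have bdd: "bdd_above S"
    using assms(2) by (meson bdd_above_Icc bdd_above_mono)
  then have upper: "\<forall>k\<in>S. k \<le> Sup S"
    by (auto intro: cSup_upper)
  have "Sup S \<le> 1"
    using assms(1,2) by (intro cSup_least) auto
  have "{0..<Sup S} \<subseteq> S"
  proof
    fix k assume k: "k \<in> {0..<Sup S}"
    then obtain s where "s \<in> S" "k < s"
      using less_cSup_iff[OF _ bdd] assms(1) by auto
    then show "k \<in> S" using down k by auto
  qed
  moreover have "0 \<le> Sup S"
    using upper assms(1) by blast
  ultimately have "Sup S \<in> S"
    using left[of "Sup S"] assms(1) \<open>Sup S \<le> 1\<close> by (cases "Sup S = 0") auto
  with upper show ?thesis by blast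
qed

lemma shell_index_is_max:
  assumes g: "graphon w" and "x \<in> {0..1}"
  shows "shell_index w x \<in> {k \<in> {0..1}. x \<in> kcore w k}
    \<and> (\<forall>k \<in> {k \<in> {0..1}. x \<in> kcore w k}. k \<le> shell_index w x)"
  unfolding shell_index_def
proof (rule cSup_attained_if_left_closed)
  show "0 \<in> {k \<in> {0..1}. x \<in> kcore w k}"
    using kcore_nonpos[OF g order_refl] assms(2) by simp
  show "k \<in> {k \<in> {0..1}. x \<in> kcore w k}"
    if "s \<in> {k \<in> {0..1}. x \<in> kcore w k}" "0 \<le> k" "k \<le> s" for s k
    using that kcore_antimono[OF g] by auto
  show "\<kappa> \<in> {k \<in> {0..1}. x \<in> kcore w k}"
    if "0 < \<kappa>" "\<kappa> \<le> 1" "{0..<\<kappa>} \<subseteq> {k \<in> {0..1}. x \<in> kcore w k}" for \<kappa>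
    using that kcore_left_continuous[OF g that(1)] by auto
qed auto

lemma degeneracy_is_max:
  assumes g: "graphon w"
  shows "degeneracy w \<in> {k \<in> {0..1}. kcore w k \<noteq> {}}
    \<and> (\<forall>k \<in> {k \<in> {0..1}. kcore w k \<noteq> {}}. k \<le> degeneracy w)"
  unfolding degeneracy_def measure_kcore_pos_iff[OF g]
proof (rule cSup_attained_if_left_closed)
  show "0 \<in> {k \<in> {0..1}. kcore w k \<noteq> {}}"
    using kcore_nonpos[OF g order_refl] by simp
  show "k \<in> {k \<in> {0..1}. kcore w k \<noteq> {}}"
    if "s \<in> {k \<in> {0..1}. kcore w k \<noteq> {}}" "0 \<le> k" "k \<le> s" for s k
    using that kcore_antimono[OF g, of k s] by auto
  show "\<kappa> \<in> {k \<in> {0..1}. kcore w k \<noteq> {}}"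
    if "0 < \<kappa>" "\<kappa> \<le> 1" "{0..<\<kappa>} \<subseteq> {k \<in> {0..1}. kcore w k \<noteq> {}}" for \<kappa>
  proof -
    have "\<kappa> \<le> measure lebesgue (kcore w \<kappa>)"
      using that(3) by (intro measure_kcore_ge_of_below[OF g that(1)]) auto
    then show ?thesis
      using that(1,2) measure_kcore_pos_iff[OF g, of \<kappa>] by auto
  qed
qed auto

theorem lemma4:
  fixes w :: "real \<Rightarrow> real \<Rightarrow> real" and x :: real
  assumes "graphon w" and "x \<in> {0..1}"
  shows "shell_index w x \<in> {k \<in> {0..1}. x \<in> kcore w k}
       \<and> (\<forall>k \<in> {k \<in> {0..1}. x \<in> kcore w k}. k \<le> shell_index w x)
       \<and> degeneracy w \<in> {k \<in> {0..1}. measure lebesgue (kcore w k) > 0}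
       \<and> (\<forall>k \<in> {k \<in> {0..1}. measure lebesgue (kcore w k) > 0}. k \<le> degeneracy w)
       \<and> degeneracy w \<in> {k \<in> {0..1}. kcore w k \<noteq> {}}
       \<and> (\<forall>k \<in> {k \<in> {0..1}. kcore w k \<noteq> {}}. k \<le> degeneracy w)
       \<and> (\<exists>y \<in> {0..1}. shell_index w y = degeneracy w)
       \<and> (\<forall>y \<in> {0..1}. shell_index w y \<le> degeneracy w)"
proof -
  note g = assms(1)
  note shell = shell_index_is_max[OF g]
  have deg: "degeneracy w \<in> {k \<in> {0..1}. kcore w k \<noteq> {}}"
    "\<forall>k \<in> {k \<in> {0..1}. kcore w k \<noteq> {}}. k \<le> degeneracy w"
    using degeneracy_is_max[OF g] by auto
  have shell_le: "\<forall>y \<in> {0..1}. shell_index w y \<le> degeneracy w"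
    using shell deg(2) by blast
  obtain y where y: "y \<in> kcore w (degeneracy w)"
    using deg(1) by blast
  then have "y \<in> {0..1}"
    using kcore_subset by blast
  then have "shell_index w y = degeneracy w"
    using shell[of y] shell_le y deg(1) by (auto intro: antisym)
  then show ?thesis
    using shell[OF assms(2)] measure_kcore_pos_iff[OF g] deg shell_le \<open>y \<in> {0..1}\<close> by auto
qed

end
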